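(* For all positive integers $k,q,m$ with $q<k$ one has $\alpha^k_{q,m}=0$; that is, every M-partition of type $(k,q,m)$ satisfies $q\geqslant k$.
   Context: Let $\mathbb N=\mathbb Z_{\geqslant 0}$ with the componentwise order. For integers $n,d\geqslant 0$, an $(n-1)$-dimensional partition of size $d$ is a subset $\lambda\subset\mathbb N^n$ with $|\lambda|=d$ closed downward for the componentwise order; $\mathrm P^n_d$ is the set of these. The degree of a point is the sum of its coordinates; $\lambda_{=i}$, $\lambda_{\geqslant i}$ are the elements of degree $i$, resp. $\geqslant i$; $h_\lambda(i)=|\lambda_{=i}|$; $\mathrm{Soc}(\lambda)$ is the set of maximal elements of $\lambda$. For positive integers $k,q,m$, an M-partition of type $(k,q,m)$ is a $\lambda\in\mathrm P^k_{1+k+q+m}$ with $\mathrm{Soc}(\lambda)\subset\lambda_{\geqslant 3}$, $h_\lambda(1)=k$, $h_\lambda(2)=q$ and $\sum_{i\geqslant 3}h_\lambda(i)=m$. $\alpha^k_{q,m}$ denotes the number of M-partitions of type $(k,q,m)$. *)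

theory Defs
  imports Main
begin

text \<open>Points of N^n are represented as lists of naturals of length n.\<close>

definition pt_le :: "nat list \<Rightarrow> nat list \<Rightarrow> bool" where
  "pt_le x y \<longleftrightarrow> length x = length y \<and> (\<forall>i<length x. x ! i \<le> y ! i)"

definition partitions :: "nat \<Rightarrow> nat \<Rightarrow> nat list set set" where
  "partitions n d = {lam. lam \<subseteq> {x. length x = n} \<and> finite lam \<and> card lam = d \<and>
      (\<forall>x\<in>lam. \<forall>y. length y = n \<and> pt_le y x \<longrightarrow> y \<in> lam)}"

definition deg :: "nat list \<Rightarrow> nat" where
  "deg x = sum_list x"

definition hfun :: "nat list set \<Rightarrow> nat \<Rightarrow> nat" where
  "hfun lam i = card {x\<in>lam. deg x = i}"

definition Soc :: "nat list set \<Rightarrow> nat list set" where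
  "Soc lam = {x\<in>lam. \<forall>y\<in>lam. pt_le x y \<longrightarrow> y = x}"

definition M_partition :: "nat \<Rightarrow> nat \<Rightarrow> nat \<Rightarrow> nat list set \<Rightarrow> bool" where
  "M_partition k q m lam \<longleftrightarrow>
     lam \<in> partitions k (1 + k + q + m) \<and>
     Soc lam \<subseteq> {x\<in>lam. deg x \<ge> 3} \<and>
     hfun lam 1 = k \<and> hfun lam 2 = q \<and>
     card {x\<in>lam. deg x \<ge> 3} = m"

definition alpha :: "nat \<Rightarrow> nat \<Rightarrow> nat \<Rightarrow> nat" where
  "alpha k q m = card {lam. M_partition k q m lam}"

end

theory Submission
  imports Defs "HOL-Library.Multiset"
begin

(* Identify a point x of N^k with the multiset containing i exactly x!i times; then lambda
   becomes a downset of multisets, degree becomes size, and the elements of degree 1 and 2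
   are the vertices and edges (loops allowed) of a graph, counted by h(1) = k and h(2) = q.
   Every vertex i lies below a maximal element, which has degree at least 3 and hence lies
   above a degree-3 element {#i,a,b#}; so i lies in a (possibly degenerate) triangle i, a, b.
   A graph in which every vertex lies in a triangle has at least as many edges as vertices:
   either every vertex has degree at least 2 and double counting applies, or a vertex of
   degree 1 can be deleted together with its edge. *)

definition point_mset :: "nat list \<Rightarrow> nat multiset" where
  "point_mset x = (\<Sum>i<length x. replicate_mset (x ! i) i)"

lemma count_point_mset: "count (point_mset x) j = (if j < length x then x ! j else 0)"
  by (simp add: point_mset_def count_sum)

lemma size_point_mset: "size (point_mset x) = deg x"
  by (simp add: point_mset_def deg_def sum_list_sum_nth atLeast0LessThan)

lemma set_mset_point_mset: "set_mset (point_mset x) \<subseteq> {..<length x}"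
proof
  fix j assume "j \<in># point_mset x"
  then have "count (point_mset x) j \<noteq> 0" by simp
  then show "j \<in> {..<length x}" by (simp add: count_point_mset split: if_splits)
qed

lemma inj_on_point_mset: "inj_on point_mset {x. length x = k}"
proof (rule inj_onI)
  fix x y assume "x \<in> {x. length x = k}" "y \<in> {x. length x = k}" and eq: "point_mset x = point_mset y"
  then have len: "length x = length y" by simp
  show "x = y"
  proof (rule nth_equalityI)
    fix i assume "i < length x"
    then show "x ! i = y ! i"
      using arg_cong[OF eq, of "\<lambda>M. count M i"] len by (simp add: count_point_mset)
  qed (rule len)
qed

lemma pt_le_iff_subseteq_point_mset:
  "pt_le x y \<longleftrightarrow> length x = length y \<and> point_mset x \<subseteq># point_mset y"
  by (auto simp: pt_le_def subseteq_mset_def count_point_mset)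

lemma point_mset_map_count:
  assumes "set_mset N \<subseteq> {..<k}"
  shows "point_mset (map (count N) [0..<k]) = N"
  using assms by (auto simp: multiset_eq_iff count_point_mset count_eq_zero_iff)

lemma card_le_card_edges_if_triangles:
  fixes V :: "'a set" and E :: "'a multiset set"
  assumes "finite V" "finite E" "\<forall>e\<in>E. size e = 2"
    and "\<forall>i\<in>V. \<exists>a b. {#i, a#} \<in> E \<and> {#i, b#} \<in> E \<and> {#a, b#} \<in> E"
  shows "card V \<le> card E"
  using assms
proof (induction "card V" arbitrary: V E rule: less_induct)
  case less
  show ?case
  proof (cases "\<forall>v\<in>V. 2 \<le> card {e\<in>E. v \<in># e}")
    case True
    have "2 * card V \<le> (\<Sum>v\<in>V. card {e\<in>E. v \<in># e})"
      using sum_mono[of V "\<lambda>_. 2" "\<lambda>v. card {e\<in>E. v \<in># e}"] True by simp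
    also have "\<dots> = (\<Sum>v\<in>V. \<Sum>e\<in>E. if v \<in># e then 1 else 0)"
      using less.prems(2) by (simp add: sum.inter_filter[symmetric])
    also have "\<dots> = (\<Sum>e\<in>E. card {v\<in>V. v \<in># e})"
      using less.prems(1) by (subst sum.swap) (simp add: sum.inter_filter[symmetric])
    also have "\<dots> \<le> (\<Sum>e\<in>E. size e)"
    proof (rule sum_mono)
      fix e
      have "card {v\<in>V. v \<in># e} \<le> card (set_mset e)" by (rule card_mono) auto
      also have "\<dots> \<le> size e" using mset_set_set_mset_msubset size_mset_mono by fastforce
      finally show "card {v\<in>V. v \<in># e} \<le> size e" .
    qed
    also have "\<dots> = 2 * card E" using less.prems(3) by simp
    finally show ?thesis by simp
  next
    case False
    then obtain v where v: "v \<in> V" "card {e\<in>E. v \<in># e} < 2" by force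
    then obtain a where "{#v, a#} \<in> E" using less.prems(4) by blast
    define e0 where "e0 = {#v, a#}"
    have "e0 \<in> {e\<in>E. v \<in># e}" using \<open>{#v, a#} \<in> E\<close> by (simp add: e0_def)
    then have only_e0: "e = e0" if "e \<in> E" "v \<in># e" for e
      using that v(2) less.prems(2) card_le_Suc0_iff_eq[of "{e\<in>E. v \<in># e}"] by auto
    define V' where "V' = V - {v}"
    define E' where "E' = E - {e0}"
    have in_E': "e \<in> E'" if "e \<in> E" "\<not> v \<in># e" for e
      using that by (auto simp: E'_def e0_def)
    have "card V' \<le> card E'"
    proof (rule less.hyps)
      show "card V' < card V" using v(1) less.prems(1) unfolding V'_def by (rule card_Diff1_less[rotated])
      show "finite V'" "finite E'" "\<forall>e\<in>E'. size e = 2"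
        using less.prems(1-3) by (auto simp: V'_def E'_def)
      show "\<forall>i\<in>V'. \<exists>a b. {#i, a#} \<in> E' \<and> {#i, b#} \<in> E' \<and> {#a, b#} \<in> E'"
      proof
        fix i assume i: "i \<in> V'"
        then have "i \<noteq> v" by (simp add: V'_def)
        obtain a b where ab: "{#i, a#} \<in> E" "{#i, b#} \<in> E" "{#a, b#} \<in> E"
          using i less.prems(4) by (auto simp: V'_def)
        show "\<exists>a b. {#i, a#} \<in> E' \<and> {#i, b#} \<in> E' \<and> {#a, b#} \<in> E'"
        proof (cases "v = a \<or> v = b")
          case True
          \<comment> \<open>both triangle edges at v must be the unique edge e0, so the triangle is i, v, i\<close>
          then have "{#i, i#} \<in> E"
          proof
            assume "v = a"
            then have "v \<in># {#i, a#}" "v \<in># {#a, b#}" by simp_all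
            then have "{#i, a#} = {#a, b#}" using ab(1,3) only_e0 by metis
            then have "b = i" using \<open>i \<noteq> v\<close> \<open>v = a\<close> by (auto simp: add_mset_commute)
            then show ?thesis using ab(2) by simp
          next
            assume "v = b"
            then have "v \<in># {#i, b#}" "v \<in># {#a, b#}" by simp_all
            then have "{#i, b#} = {#a, b#}" using ab(2,3) only_e0 by metis
            then have "a = i" using \<open>i \<noteq> v\<close> \<open>v = b\<close> by (auto simp: add_mset_commute)
            then show ?thesis using ab(1) by simp
          qed
          then have "{#i, i#} \<in> E'" using \<open>i \<noteq> v\<close> in_E' by simp
          then show ?thesis by blast
        next
          case False
          then have "{#i, a#} \<in> E'" "{#i, b#} \<in> E'" "{#a, b#} \<in> E'"
            using ab \<open>i \<noteq> v\<close> in_E' by simp_all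
          then show ?thesis by blast
        qed
      qed
    qed
    moreover have "card V' = card V - 1" "card E' = card E - 1"
      using v(1) \<open>e0 \<in> {e\<in>E. v \<in># e}\<close> by (auto simp: V'_def E'_def)
    moreover have "card E \<ge> 1"
      using \<open>e0 \<in> {e\<in>E. v \<in># e}\<close> less.prems(2) by (auto simp: Suc_le_eq card_gt_0_iff)
    ultimately show ?thesis by linarith
  qed
qed

lemma card_singletons_le_card_pairs:
  fixes L :: "'a multiset set"
  assumes "finite L"
    and down_closed: "\<And>M N. M \<in> L \<Longrightarrow> N \<subseteq># M \<Longrightarrow> N \<in> L"
    and maximal_size: "\<And>M. M \<in> L \<Longrightarrow> \<forall>M'\<in>L. M \<subseteq># M' \<longrightarrow> M = M' \<Longrightarrow> 3 \<le> size M"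
  shows "card {i. {#i#} \<in> L} \<le> card {M\<in>L. size M = 2}"
proof (rule card_le_card_edges_if_triangles)
  show "finite {i. {#i#} \<in> L}"
    using finite_vimageI[OF \<open>finite L\<close>, of "\<lambda>i. {#i#}"] by (simp add: vimage_def inj_def)
  show "finite {M\<in>L. size M = 2}" "\<forall>e\<in>{M\<in>L. size M = 2}. size e = 2"
    using \<open>finite L\<close> by auto
  show "\<forall>i\<in>{i. {#i#} \<in> L}. \<exists>a b. {#i, a#} \<in> {M\<in>L. size M = 2} \<and>
      {#i, b#} \<in> {M\<in>L. size M = 2} \<and> {#a, b#} \<in> {M\<in>L. size M = 2}"
  proof
    fix i assume "i \<in> {i. {#i#} \<in> L}"
    then obtain M where M: "M \<in> L" "{#i#} \<subseteq># M" "\<forall>M'\<in>L. M \<subseteq># M' \<longrightarrow> M = M'"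
      using subset_mset.finite_has_maximal2[OF \<open>finite L\<close>] by blast
    obtain M1 where M1: "M = add_mset i M1" using M(2) multi_member_split by force
    then have "size M1 \<ge> 2" using maximal_size[OF M(1,3)] by simp
    then obtain a M2 where M2: "M1 = add_mset a M2"
      using size_eq_Suc_imp_eq_union[of M1 "size M1 - 1"] by auto
    then have "size M2 \<ge> 1" using \<open>size M1 \<ge> 2\<close> by simp
    then obtain b M3 where "M2 = add_mset b M3"
      using size_eq_Suc_imp_eq_union[of M2 "size M2 - 1"] by auto
    then have abi: "{#i, a, b#} \<subseteq># M" using M1 M2 by simp
    have "{#i, a#} \<subseteq># {#i, a, b#}" "{#i, b#} \<subseteq># {#i, a, b#}" "{#a, b#} \<subseteq># {#i, a, b#}"
      by (simp_all add: add_mset_commute)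
    then have "{#i, a#} \<in> L" "{#i, b#} \<in> L" "{#a, b#} \<in> L"
      using down_closed[OF M(1)] abi subset_mset.order_trans by blast+
    then show "\<exists>a b. {#i, a#} \<in> {M\<in>L. size M = 2} \<and>
      {#i, b#} \<in> {M\<in>L. size M = 2} \<and> {#a, b#} \<in> {M\<in>L. size M = 2}"
      by auto
  qed
qed

lemma card_size_one_eq_card_singletons: "card {M\<in>L. size M = 1} = card {i. {#i#} \<in> L}"
proof -
  have "{M\<in>L. size M = 1} = (\<lambda>i. {#i#}) ` {i. {#i#} \<in> L}"
  proof (intro equalityI subsetI)
    fix M assume "M \<in> {M\<in>L. size M = 1}"
    then show "M \<in> (\<lambda>i. {#i#}) ` {i. {#i#} \<in> L}" using size_1_singleton_mset[of M] by auto
  qed auto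
  then show ?thesis by (simp add: card_image inj_on_def)
qed

lemma point_mset_partition_down_closed:
  assumes "lam \<in> partitions k d" "M \<in> point_mset ` lam" "N \<subseteq># M"
  shows "N \<in> point_mset ` lam"
proof -
  obtain x where x: "x \<in> lam" "M = point_mset x" using assms(2) by blast
  have "length x = k" using assms(1) x(1) by (auto simp: partitions_def)
  then have "set_mset N \<subseteq> {..<k}"
    using set_mset_mono[OF assms(3)] set_mset_point_mset[of x] x(2) by blast
  define y where "y = map (count N) [0..<k]"
  have "point_mset y = N" using point_mset_map_count[OF \<open>set_mset N \<subseteq> {..<k}\<close>] by (simp add: y_def)
  moreover have "pt_le y x"
    using \<open>length x = k\<close> assms(3) x(2) \<open>point_mset y = N\<close>
    by (simp add: pt_le_iff_subseteq_point_mset y_def)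
  then have "y \<in> lam" using assms(1) x(1) by (auto simp: partitions_def y_def)
  ultimately show ?thesis by blast
qed

lemma hfun_eq_card_point_mset:
  assumes "lam \<in> partitions k d"
  shows "hfun lam n = card {M \<in> point_mset ` lam. size M = n}"
proof -
  have "inj_on point_mset {x\<in>lam. deg x = n}"
    by (rule inj_on_subset[OF inj_on_point_mset[of k]]) (use assms in \<open>auto simp: partitions_def\<close>)
  moreover have "{M \<in> point_mset ` lam. size M = n} = point_mset ` {x\<in>lam. deg x = n}"
    by (auto simp: size_point_mset)
  ultimately show ?thesis by (simp add: hfun_def card_image)
qed

lemma maximal_point_mset_in_Soc:
  assumes "lam \<in> partitions k d" "x \<in> lam"
    and "\<forall>M\<in>point_mset ` lam. point_mset x \<subseteq># M \<longrightarrow> point_mset x = M"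
  shows "x \<in> Soc lam"
  using assms inj_on_point_mset[of k] unfolding Soc_def partitions_def
  by (auto simp: pt_le_iff_subseteq_point_mset inj_on_def)

lemma M_partition_le:
  assumes "M_partition k q m lam"
  shows "k \<le> q"
proof -
  have lam: "lam \<in> partitions k (1 + k + q + m)"
    and Soc_deg: "Soc lam \<subseteq> {x\<in>lam. 3 \<le> deg x}"
    and "hfun lam 1 = k" "hfun lam 2 = q"
    using assms by (auto simp: M_partition_def)
  let ?L = "point_mset ` lam"
  have "k = card {M\<in>?L. size M = 1}"
    using \<open>hfun lam 1 = k\<close> by (simp add: hfun_eq_card_point_mset[OF lam])
  also have "\<dots> = card {i. {#i#} \<in> ?L}" by (rule card_size_one_eq_card_singletons)
  also have "\<dots> \<le> card {M\<in>?L. size M = 2}"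
  proof (rule card_singletons_le_card_pairs)
    show "finite ?L" using lam by (simp add: partitions_def)
    show "N \<in> ?L" if "M \<in> ?L" "N \<subseteq># M" for M N
      using point_mset_partition_down_closed[OF lam that] .
    show "3 \<le> size M" if "M \<in> ?L" and maximal: "\<forall>M'\<in>?L. M \<subseteq># M' \<longrightarrow> M = M'" for M
    proof -
      obtain x where "x \<in> lam" "M = point_mset x" using \<open>M \<in> ?L\<close> by blast
      then have "x \<in> Soc lam" using maximal_point_mset_in_Soc[OF lam] maximal by blast
      then show ?thesis using Soc_deg \<open>M = point_mset x\<close> by (auto simp: size_point_mset)
    qed
  qed
  also have "\<dots> = q"
    using \<open>hfun lam 2 = q\<close> by (simp add: hfun_eq_card_point_mset[OF lam])
  finally show ?thesis .
qed

theorem proposition4p2: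
  fixes k q m :: nat
  assumes "0 < k" and "0 < q" and "0 < m" and "q < k"
  shows "alpha k q m = 0 \<and> (\<forall>lam. \<not> M_partition k q m lam)"
proof -
  have "\<forall>lam. \<not> M_partition k q m lam" using M_partition_le \<open>q < k\<close> by (meson not_le)
  then show ?thesis by (simp add: alpha_def)
qed

end
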